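(* Let $\gamma>1$. Consider states $(\rho,\rho v,\rho e)$ with $\rho>0$, $v=\rho v/\rho$, $p=(\gamma-1)\rho e$, together with a time-independent gravity potential value $\phi_i$ attached to each cell $i$ (treated as an extra state component). Consider the semi-discretization of $\partial_t\rho+\partial_x(\rho v)=0$, $\partial_t(\rho v)+\partial_x(\rho v^2+p)=-\rho\partial_x\phi$, $\partial_t(\rho e)+\partial_x(\rho ev+pv)-v\partial_xp=0$: $$\partial_t\rho_i+\frac{f^\rho_{i+1/2}-f^\rho_{i-1/2}}{\Delta x}=0,$$ $$\partial_t(\rho v)_i+\frac{f^{\rho v}_{i+1/2}-f^{\rho v}_{i-1/2}}{\Delta x}+\frac{\rho^{\mathrm{num}}_{i+1/2}[\![\phi]\!]_{i+1/2}+\rho^{\mathrm{num}}_{i-1/2}[\![\phi]\!]_{i-1/2}}{2\Delta x}=0,$$ $$\partial_t(\rho e)_i+\frac{f^{\rho e}_{i+1/2}-f^{\rho e}_{i-1/2}}{\Delta x}-\frac{v^{\mathrm{num}}_{i+1/2}[\![p]\!]_{i+1/2}+v^{\mathrm{num}}_{i-1/2}[\![p]\!]_{i-1/2}}{2\Delta x}=0,$$ with consistent two-point fluxes $f^\rho,f^{\rho v},f^{\rho e},\rho^{\mathrm{num}},v^{\mathrm{num}}$ (consistent with $\rho v$, $\rho v^2+p$, $\rho ev+pv$, $\rho$, $v$ respectively). If the fluxes satisfy the kinetic-energy-preserving conditions $$f^{\rho v}=\{\{v\}\}f^\rho+\{\{p\}\},\qquad f^\rho=\rho^{\mathrm{num}}\{\{v\}\},\qquad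 v^{\mathrm{num}}=\{\{v\}\},$$ (with the same $\rho^{\mathrm{num}}$ as in the gravity term), then the semi-discretization conserves the total energy $U=\rho e+\tfrac12\rho v^2+\rho\phi$, i.e., it is entropy-conservative for the pair $(U,F)$ with $F=(U+p)v$.
   Context: $\{\{a\}\}=\tfrac12(a_-+a_+)$, $[\![a]\!]=a_+-a_-$; subscript $i+1/2$ means evaluation at $(u_-,u_+)=(u_i,u_{i+1})$. The "entropy variables" of $U$ with respect to $(\rho,\rho v,\rho e)$ are $\omega=(-\tfrac12v^2+\phi,\ v,\ 1)$. Entropy-conservative for $(U,F)$ means: there exists a two-point $F^{\mathrm{num}}$ with $F^{\mathrm{num}}(u,u)=F(u)$ such that for all grid states and all $i$, $\omega(u_i)\cdot\partial_tu_i=-\frac{1}{\Delta x}(F^{\mathrm{num}}(u_i,u_{i+1})-F^{\mathrm{num}}(u_{i-1},u_i))$. *)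

theory Defs
  imports Main "HOL.Real"
begin

record state =
  rho  :: real
  mom  :: real
  rhoe :: real
  phi  :: real

definition vel :: "state \<Rightarrow> real" where
  "vel u = mom u / rho u"

definition pres :: "real \<Rightarrow> state \<Rightarrow> real" where
  "pres \<gamma> u = (\<gamma> - 1) * rhoe u"

definition avg :: "real \<Rightarrow> real \<Rightarrow> real" where
  "avg a b = (a + b) / 2"

definition jump :: "real \<Rightarrow> real \<Rightarrow> real" where
  "jump a b = b - a"

definition Utot :: "real \<Rightarrow> state \<Rightarrow> real" where
  "Utot \<gamma> u = rhoe u + 1/2 * rho u * (vel u)^2 + rho u * phi u"

definition Fflux :: "real \<Rightarrow> state \<Rightarrow> real" where
  "Fflux \<gamma> u = (Utot \<gamma> u + pres \<gamma> u) * vel u"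

text \<open>Entropy variables of U with respect to (rho, rho v, rho e).\<close>
definition omega :: "state \<Rightarrow> real \<times> real \<times> real" where
  "omega u = (phi u - (vel u)^2 / 2, vel u, 1)"

definition dot3 :: "real \<times> real \<times> real \<Rightarrow> real \<times> real \<times> real \<Rightarrow> real" where
  "dot3 a b = fst a * fst b + fst (snd a) * fst (snd b) + snd (snd a) * snd (snd b)"

text \<open>The semi-discretization: time derivatives of (rho, rho v, rho e) in cell i,
  for a grid state us :: int => state (phi is time-independent).\<close>
definition semidisc ::
  "real \<Rightarrow> real \<Rightarrow> (state \<Rightarrow> state \<Rightarrow> real) \<Rightarrow> (state \<Rightarrow> state \<Rightarrow> real) \<Rightarrow>
   (state \<Rightarrow> state \<Rightarrow> real) \<Rightarrow> (state \<Rightarrow> state \<Rightarrow> real) \<Rightarrow> (state \<Rightarrow> state \<Rightarrow> real) \<Rightarrow>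
   (int \<Rightarrow> state) \<Rightarrow> int \<Rightarrow> real \<times> real \<times> real" where
  "semidisc \<gamma> dx frho fmom fe rnum vnum us i =
    (let um = us (i - 1); u0 = us i; up = us (i + 1) in
     ( - (frho u0 up - frho um u0) / dx,
       - (fmom u0 up - fmom um u0) / dx
         - (rnum u0 up * jump (phi u0) (phi up) + rnum um u0 * jump (phi um) (phi u0)) / (2 * dx),
       - (fe u0 up - fe um u0) / dx
         + (vnum u0 up * jump (pres \<gamma> u0) (pres \<gamma> up)
            + vnum um u0 * jump (pres \<gamma> um) (pres \<gamma> u0)) / (2 * dx)))"

definition entropy_conservative ::
  "(state \<Rightarrow> real) \<Rightarrow> real \<Rightarrow> ((int \<Rightarrow> state) \<Rightarrow> int \<Rightarrow> real \<times> real \<times> real) \<Rightarrow> bool" where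
  "entropy_conservative F dx sd \<longleftrightarrow>
    (\<exists>Fnum :: state \<Rightarrow> state \<Rightarrow> real.
       (\<forall>u. rho u > 0 \<longrightarrow> Fnum u u = F u) \<and>
       (\<forall>us i. (\<forall>j. rho (us j) > 0) \<longrightarrow>
          dot3 (omega (us i)) (sd us i) = - (Fnum (us i) (us (i + 1)) - Fnum (us (i - 1)) (us i)) / dx))"

end

theory Submission
  imports Defs
begin

text \<open>Dotting the scheme with \<open>\<omega>(u\<^sub>i)\<close> splits the energy production of cell \<open>i\<close> into one
  contribution per interface. Under the kinetic-energy-preserving conditions, the contribution of
  interface \<open>i \<plusminus> 1/2\<close> is \<open>\<mp>(F\<^sup>n\<^sup>u\<^sup>m\<^sub>i\<^sub>\<plusminus>\<^sub>1\<^sub>/\<^sub>2 + v\<^sub>i p\<^sub>i)\<close> for a two-point flux \<open>F\<^sup>n\<^sup>u\<^sup>m\<close>: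
  since the gravity source uses the same \<open>\<rho>\<^sup>n\<^sup>u\<^sup>m\<close> as the mass flux,
  \<open>\<phi> \<partial>\<^sub>x(\<rho>v) + \<rho>v \<partial>\<^sub>x\<phi>\<close> becomes a flux, and the nonconservative pressure term with
  \<open>{{v}}\<close> absorbs the pressure work. The cell-local terms \<open>v\<^sub>i p\<^sub>i\<close> cancel.\<close>

definition kep_fluxes ::
  "real \<Rightarrow> (state \<Rightarrow> state \<Rightarrow> real) \<Rightarrow> (state \<Rightarrow> state \<Rightarrow> real) \<Rightarrow>
   (state \<Rightarrow> state \<Rightarrow> real) \<Rightarrow> (state \<Rightarrow> state \<Rightarrow> real) \<Rightarrow> state \<Rightarrow> state \<Rightarrow> bool" where
  "kep_fluxes \<gamma> frho fmom rnum vnum a b \<longleftrightarrow>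
     fmom a b = avg (vel a) (vel b) * frho a b + avg (pres \<gamma> a) (pres \<gamma> b) \<and>
     frho a b = rnum a b * avg (vel a) (vel b) \<and>
     vnum a b = avg (vel a) (vel b)"

definition energy_flux ::
  "real \<Rightarrow> (state \<Rightarrow> state \<Rightarrow> real) \<Rightarrow> (state \<Rightarrow> state \<Rightarrow> real) \<Rightarrow> state \<Rightarrow> state \<Rightarrow> real" where
  "energy_flux \<gamma> rnum fe a b =
     fe a b + rnum a b * (phi a * vel b + phi b * vel a) / 2
     + rnum a b * avg (vel a) (vel b) * vel a * vel b / 2
     - jump (vel a) (vel b) * jump (pres \<gamma> a) (pres \<gamma> b) / 4"

lemma energy_flux_consistent:
  assumes "rnum u u = rho u" and "fe u u = rhoe u * vel u + pres \<gamma> u * vel u"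
  shows "energy_flux \<gamma> rnum fe u u = Fflux \<gamma> u"
  using assms
  by (simp add: energy_flux_def Fflux_def Utot_def avg_def jump_def algebra_simps power2_eq_square)

lemma kep_right_interface:
  assumes "kep_fluxes \<gamma> frho fmom rnum vnum b c"
  shows "(phi b - (vel b)\<^sup>2 / 2) * frho b c
           + vel b * (fmom b c + rnum b c * jump (phi b) (phi c) / 2)
           + fe b c - vnum b c * jump (pres \<gamma> b) (pres \<gamma> c) / 2
         = energy_flux \<gamma> rnum fe b c + vel b * pres \<gamma> b"
proof -
  have "fmom b c = avg (vel b) (vel c) * (rnum b c * avg (vel b) (vel c)) + avg (pres \<gamma> b) (pres \<gamma> c)"
    and "frho b c = rnum b c * avg (vel b) (vel c)" and "vnum b c = avg (vel b) (vel c)"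
    using assms by (auto simp: kep_fluxes_def)
  then show ?thesis
    by (simp only:) (simp add: energy_flux_def avg_def jump_def field_simps power2_eq_square)
qed

lemma kep_left_interface:
  assumes "kep_fluxes \<gamma> frho fmom rnum vnum a b"
  shows "(phi b - (vel b)\<^sup>2 / 2) * frho a b
           + vel b * (fmom a b - rnum a b * jump (phi a) (phi b) / 2)
           + fe a b + vnum a b * jump (pres \<gamma> a) (pres \<gamma> b) / 2
         = energy_flux \<gamma> rnum fe a b + vel b * pres \<gamma> b"
proof -
  have "fmom a b = avg (vel a) (vel b) * (rnum a b * avg (vel a) (vel b)) + avg (pres \<gamma> a) (pres \<gamma> b)"
    and "frho a b = rnum a b * avg (vel a) (vel b)" and "vnum a b = avg (vel a) (vel b)"
    using assms by (auto simp: kep_fluxes_def)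
  then show ?thesis
    by (simp only:) (simp add: energy_flux_def avg_def jump_def field_simps power2_eq_square)
qed

lemma semidisc_energy_balance:
  assumes "kep_fluxes \<gamma> frho fmom rnum vnum (us (i - 1)) (us i)"
    and "kep_fluxes \<gamma> frho fmom rnum vnum (us i) (us (i + 1))"
  shows "dot3 (omega (us i)) (semidisc \<gamma> dx frho fmom fe rnum vnum us i)
         = - (energy_flux \<gamma> rnum fe (us i) (us (i + 1))
              - energy_flux \<gamma> rnum fe (us (i - 1)) (us i)) / dx"
proof -
  define a b c where "a = us (i - 1)" and "b = us i" and "c = us (i + 1)"
  have "dot3 (omega b) (semidisc \<gamma> dx frho fmom fe rnum vnum us i)
        = ((phi b - (vel b)\<^sup>2 / 2) * frho a b
             + vel b * (fmom a b - rnum a b * jump (phi a) (phi b) / 2)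
             + fe a b + vnum a b * jump (pres \<gamma> a) (pres \<gamma> b) / 2
           - ((phi b - (vel b)\<^sup>2 / 2) * frho b c
             + vel b * (fmom b c + rnum b c * jump (phi b) (phi c) / 2)
             + fe b c - vnum b c * jump (pres \<gamma> b) (pres \<gamma> c) / 2)) / dx"
    unfolding semidisc_def Let_def dot3_def omega_def a_def b_def c_def
    by (simp add: diff_divide_distrib add_divide_distrib algebra_simps)
  also have "\<dots> = - (energy_flux \<gamma> rnum fe b c - energy_flux \<gamma> rnum fe a b) / dx"
    using kep_left_interface[of \<gamma> frho fmom rnum vnum a b fe]
      kep_right_interface[of \<gamma> frho fmom rnum vnum b c fe] assms
    by (simp add: a_def b_def c_def)
  finally show ?thesis
    by (simp add: a_def b_def c_def)
qed

theorem mainTheorem11: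
  fixes \<gamma> dx :: real
    and frho fmom fe rnum vnum :: "state \<Rightarrow> state \<Rightarrow> real"
  assumes "\<gamma> > 1" and "dx > 0"
    and cons_rho: "\<And>u. rho u > 0 \<Longrightarrow> frho u u = mom u"
    and cons_mom: "\<And>u. rho u > 0 \<Longrightarrow> fmom u u = mom u * vel u + pres \<gamma> u"
    and cons_e: "\<And>u. rho u > 0 \<Longrightarrow> fe u u = rhoe u * vel u + pres \<gamma> u * vel u"
    and cons_rnum: "\<And>u. rho u > 0 \<Longrightarrow> rnum u u = rho u"
    and cons_vnum: "\<And>u. rho u > 0 \<Longrightarrow> vnum u u = vel u"
    and kep1: "\<And>a b. rho a > 0 \<Longrightarrow> rho b > 0 \<Longrightarrow>
                 fmom a b = avg (vel a) (vel b) * frho a b + avg (pres \<gamma> a) (pres \<gamma> b)"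
    and kep2: "\<And>a b. rho a > 0 \<Longrightarrow> rho b > 0 \<Longrightarrow>
                 frho a b = rnum a b * avg (vel a) (vel b)"
    and kep3: "\<And>a b. rho a > 0 \<Longrightarrow> rho b > 0 \<Longrightarrow>
                 vnum a b = avg (vel a) (vel b)"
  shows "entropy_conservative (Fflux \<gamma>) dx (semidisc \<gamma> dx frho fmom fe rnum vnum)"
  unfolding entropy_conservative_def
proof (intro exI[of _ "energy_flux \<gamma> rnum fe"] conjI allI impI)
  fix u :: state
  assume "rho u > 0"
  then show "energy_flux \<gamma> rnum fe u u = Fflux \<gamma> u"
    by (simp add: energy_flux_consistent cons_rnum cons_e)
next
  fix us :: "int \<Rightarrow> state" and i :: int
  assume "\<forall>j. rho (us j) > 0"
  moreover have "kep_fluxes \<gamma> frho fmom rnum vnum a b" if "rho a > 0" "rho b > 0" for a b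
    using kep1 kep2 kep3 that by (simp add: kep_fluxes_def)
  ultimately show "dot3 (omega (us i)) (semidisc \<gamma> dx frho fmom fe rnum vnum us i)
      = - (energy_flux \<gamma> rnum fe (us i) (us (i + 1))
           - energy_flux \<gamma> rnum fe (us (i - 1)) (us i)) / dx"
    by (simp add: semidisc_energy_balance)
qed

end
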